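(* Let $\phi(t,x)=(2\pi)^{-1/2}\int_{\mathbb{R}} e^{i(kx-\hbar k^2t/(2m))}\varphi(k)\,dk$ be a freely evolving wave packet, where $\varphi\in C^1(\mathbb{R})$ has $\mathrm{supp}\,\varphi\subseteq[a_1,a_2]$ with $0<a_1<a_2$. Let $j(t,x)=\frac{\hbar}{m}\mathrm{Im}\big(\overline{\phi(t,x)}\,\partial_x\phi(t,x)\big)$ be its probability current density. Then for every fixed $\tau\in\mathbb{R}$, \[ \lim_{M\to\infty}\int_{-M}^{\tau} j(s,M)\,ds=0 . \]
   Context: $\hbar,m>0$ are constants; $\phi$ is the solution of the free Schrödinger equation $i\hbar\partial_t\phi=-\frac{\hbar^2}{2m}\partial_x^2\phi$ with initial Fourier transform $\varphi$. *)

theory Defs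
  imports "HOL-Analysis.Analysis"
begin

definition free_packet :: "real \<Rightarrow> real \<Rightarrow> (real \<Rightarrow> complex) \<Rightarrow> real \<Rightarrow> real \<Rightarrow> complex" where
  "free_packet hbar m vphi t x =
     complex_of_real (1 / sqrt (2 * pi)) *
     integral UNIV (\<lambda>k. exp (\<i> * complex_of_real (k * x - hbar * k\<^sup>2 * t / (2 * m))) * vphi k)"

definition prob_current :: "real \<Rightarrow> real \<Rightarrow> (real \<Rightarrow> complex) \<Rightarrow> real \<Rightarrow> real \<Rightarrow> real" where
  "prob_current hbar m vphi t x =
     hbar / m * Im (cnj (free_packet hbar m vphi t x) *
        vector_derivative (\<lambda>y. free_packet hbar m vphi t y) (at x))"

end

theory Submission
  imports Defs
begin

(* On the support [a1, a2] of vphi the phase k x - hbar k^2 s / (2 m) has k-derivative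
   x - hbar s k / m. Since k > 0, for x = M large and s in [-M, tau] this derivative is at least
   M / 2, while hbar |s| / m = O(M). One integration by parts in k (vphi vanishes at a1 and a2)
   then shows that phi(s, M) and d/dx phi(s, M) are O(1/M) uniformly in s, so j(s, M) = O(1/M^2),
   and its integral over [-M, tau], an interval of length at most 2 M, is O(1/M). *)

definition phase_integral :: "real \<Rightarrow> real \<Rightarrow> real \<Rightarrow> real \<Rightarrow> (real \<Rightarrow> complex) \<Rightarrow> complex" where
  "phase_integral a b x \<beta> g = integral {a..b} (\<lambda>k. exp (\<i> * of_real (k * x - \<beta> * k\<^sup>2)) * g k)"

lemma has_vector_derivative_exp_i_of_real:
  assumes "(f has_real_derivative f') (at t within S)"
  shows "((\<lambda>t. exp (\<i> * of_real (f t))) has_vector_derivative \<i> * of_real f' * exp (\<i> * of_real (f t)))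
           (at t within S)"
proof -
  have "((\<lambda>t. \<i> * of_real (f t)) has_vector_derivative \<i> * of_real f') (at t within S)"
    using assms by (intro has_vector_derivative_mult_right has_vector_derivative_of_real)
  from field_vector_diff_chain_within[OF this has_field_derivative_at_within[OF DERIV_exp]]
  show ?thesis by (simp add: o_def)
qed

lemma continuous_vanishing_outside_Icc_endpoints:
  fixes f :: "real \<Rightarrow> 'a::{t2_space,zero}"
  assumes "continuous_on UNIV f" and "\<And>k. k \<notin> {a..b} \<Longrightarrow> f k = 0"
  shows "f a = 0" and "f b = 0"
proof -
  have zeros_closed: "closed {k. f k = 0}"
    using assms(1) by (intro closed_Collect_eq) auto
  have "closure {..<a} \<subseteq> {k. f k = 0}" "closure {b<..} \<subseteq> {k. f k = 0}"
    using assms(2) by (intro closure_minimal zeros_closed; force)+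
  then show "f a = 0" "f b = 0" by auto
qed

lemma phase_integral_by_parts:
  fixes g g' :: "real \<Rightarrow> complex" and x \<beta> :: real
  defines "P \<equiv> \<lambda>k. complex_of_real (x - 2 * \<beta> * k)"
  assumes ab: "a \<le> b"
    and g: "\<And>k. k \<in> {a..b} \<Longrightarrow> (g has_vector_derivative g' k) (at k within {a..b})"
    and g': "continuous_on {a..b} g'"
    and ga: "g a = 0" and gb: "g b = 0"
    and P: "\<And>k. k \<in> {a..b} \<Longrightarrow> P k \<noteq> 0"
  shows "phase_integral a b x \<beta> g =
           phase_integral a b x \<beta> (\<lambda>k. \<i> * (g' k / P k + 2 * \<beta> * g k / (P k)\<^sup>2))"
proof -
  define e where "e k = exp (\<i> * of_real (k * x - \<beta> * k\<^sup>2))" for k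
  define h where "h k = \<i> * (g' k / P k + 2 * \<beta> * g k / (P k)\<^sup>2)" for k
  define F where "F k = - \<i> * (e k * g k * (1 / P k))" for k
  have e: "(e has_vector_derivative \<i> * P k * e k) (at k within {a..b})" for k
    unfolding e_def P_def
    by (rule has_vector_derivative_exp_i_of_real) (auto intro!: derivative_eq_intros)
  have F: "(F has_vector_derivative e k * g k - e k * h k) (at k within {a..b})"
    if k: "k \<in> {a..b}" for k
  proof -
    have "((\<lambda>k. complex_of_real (1 / (x - 2 * \<beta> * k))) has_vector_derivative
            of_real (2 * \<beta> / (x - 2 * \<beta> * k)\<^sup>2)) (at k within {a..b})"
      using P[OF k] unfolding P_def
      by (intro has_vector_derivative_of_real)
        (auto intro!: derivative_eq_intros simp: power2_eq_square field_simps)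
    then have "((\<lambda>k. 1 / P k) has_vector_derivative 2 * \<beta> / (P k)\<^sup>2) (at k within {a..b})"
      by (simp add: P_def)
    from has_vector_derivative_mult_right[OF
        has_vector_derivative_mult[OF has_vector_derivative_mult[OF e g[OF k]] this], of "- \<i>"]
    show ?thesis
      unfolding F_def
    proof (rule has_vector_derivative_eq_rhs)
      show "- \<i> * ((e k * g k) * (2 * \<beta> / (P k)\<^sup>2) + (e k * g' k + \<i> * P k * e k * g k) * (1 / P k))
          = e k * g k - e k * h k"
        using P[OF k] unfolding h_def by (simp add: field_simps power2_eq_square)
    qed
  qed
  have "continuous_on {a..b} g"
    using g by (rule continuous_on_vector_derivative)
  moreover have "continuous_on {a..b} P"
    unfolding P_def by (intro continuous_intros)
  ultimately have "continuous_on {a..b} (\<lambda>k. e k * h k)"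
    unfolding e_def h_def by (intro continuous_intros g') (simp_all add: P)
  then have eh: "((\<lambda>k. e k * h k) has_integral integral {a..b} (\<lambda>k. e k * h k)) {a..b}"
    by (intro integrable_integral integrable_continuous_interval)
  have "((\<lambda>k. e k * g k - e k * h k) has_integral F b - F a) {a..b}"
    using ab F by (intro fundamental_theorem_of_calculus) auto
  from has_integral_add[OF this eh]
  have "((\<lambda>k. e k * g k) has_integral integral {a..b} (\<lambda>k. e k * h k)) {a..b}"
    using ga gb by (simp add: F_def)
  then show ?thesis
    unfolding phase_integral_def e_def h_def by (rule integral_unique)
qed

lemma norm_phase_integral_le:
  fixes g g' :: "real \<Rightarrow> complex" and x \<beta> L G0 G1 :: real
  assumes ab: "a \<le> b"
    and g: "\<And>k. k \<in> {a..b} \<Longrightarrow> (g has_vector_derivative g' k) (at k within {a..b})"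
    and g': "continuous_on {a..b} g'"
    and ga: "g a = 0" and gb: "g b = 0"
    and L: "0 < L" "\<And>k. k \<in> {a..b} \<Longrightarrow> L \<le> x - 2 * \<beta> * k"
    and G0: "\<And>k. k \<in> {a..b} \<Longrightarrow> norm (g k) \<le> G0"
    and G1: "\<And>k. k \<in> {a..b} \<Longrightarrow> norm (g' k) \<le> G1"
  shows "norm (phase_integral a b x \<beta> g) \<le> (b - a) * (G1 / L + 2 * \<bar>\<beta>\<bar> * G0 / L\<^sup>2)"
proof -
  define P where "P k = complex_of_real (x - 2 * \<beta> * k)" for k
  define h where "h k = \<i> * (g' k / P k + 2 * \<beta> * g k / (P k)\<^sup>2)" for k
  have P: "L \<le> norm (P k)" "P k \<noteq> 0" if "k \<in> {a..b}" for k
  proof -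
    have "norm (P k) = \<bar>x - 2 * \<beta> * k\<bar>"
      unfolding P_def by (rule norm_of_real)
    then show "L \<le> norm (P k)" using L(2)[OF that] by linarith
    then show "P k \<noteq> 0" using L(1) by auto
  qed
  have by_parts: "phase_integral a b x \<beta> g = phase_integral a b x \<beta> h"
    unfolding h_def P_def
    by (rule phase_integral_by_parts[OF ab g g' ga gb]) (use P in \<open>auto simp: P_def\<close>)
  have "continuous_on {a..b} g"
    using g by (rule continuous_on_vector_derivative)
  moreover have "continuous_on {a..b} P"
    unfolding P_def by (intro continuous_intros)
  ultimately have "continuous_on {a..b} (\<lambda>k. exp (\<i> * of_real (k * x - \<beta> * k\<^sup>2)) * h k)"
    unfolding h_def by (intro continuous_intros g') (simp_all add: P)
  moreover have "norm (exp (\<i> * of_real (k * x - \<beta> * k\<^sup>2)) * h k) \<le> G1 / L + 2 * \<bar>\<beta>\<bar> * G0 / L\<^sup>2"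
    if k: "k \<in> {a..b}" for k
  proof -
    have "norm (h k) \<le> norm (g' k) / norm (P k) + 2 * \<bar>\<beta>\<bar> * norm (g k) / (norm (P k))\<^sup>2"
      unfolding h_def using norm_triangle_ineq[of "g' k / P k" "2 * \<beta> * g k / (P k)\<^sup>2"]
      by (simp add: norm_mult norm_divide norm_power)
    also have "\<dots> \<le> G1 / L + 2 * \<bar>\<beta>\<bar> * G0 / L\<^sup>2"
      using P[OF k] L(1) G0[OF k] G1[OF k] order_trans[OF norm_ge_zero G0[OF k]]
        order_trans[OF norm_ge_zero G1[OF k]]
      by (intro add_mono frac_le mult_left_mono power_mono) auto
    finally show ?thesis by (simp add: norm_mult)
  qed
  ultimately have "norm (phase_integral a b x \<beta> h) \<le> (G1 / L + 2 * \<bar>\<beta>\<bar> * G0 / L\<^sup>2) * (b - a)"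
    unfolding phase_integral_def by (intro integral_bound ab) auto
  then show ?thesis
    unfolding by_parts by (simp add: mult.commute)
qed

lemma phase_integral_decay:
  fixes g :: "real \<Rightarrow> complex"
  assumes "0 \<le> a" and "a \<le> b" and "g C1_differentiable_on {a..b}" and "g a = 0" and "g b = 0"
  obtains C where "\<And>x \<beta>. 0 < x \<Longrightarrow> 4 * \<beta> * b \<le> x \<Longrightarrow> \<bar>\<beta>\<bar> \<le> \<rho> * x \<Longrightarrow>
                     norm (phase_integral a b x \<beta> g) \<le> C / x"
proof -
  obtain g' where g: "\<And>k. k \<in> {a..b} \<Longrightarrow> (g has_vector_derivative g' k) (at k)"
    and g': "continuous_on {a..b} g'"
    using assms(3) unfolding C1_differentiable_on_def by blast
  obtain G0 where G0: "\<And>k. k \<in> {a..b} \<Longrightarrow> norm (g k) \<le> G0"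
    using continuous_on_compact_bound[OF compact_Icc C1_differentiable_imp_continuous_on[OF assms(3)]]
    by blast
  obtain G1 where G1: "\<And>k. k \<in> {a..b} \<Longrightarrow> norm (g' k) \<le> G1"
    using continuous_on_compact_bound[OF compact_Icc g'] by blast
  have "norm (phase_integral a b x \<beta> g) \<le> (b - a) * (2 * G1 + 8 * \<rho> * G0) / x"
    if x: "0 < x" and \<beta>: "4 * \<beta> * b \<le> x" "\<bar>\<beta>\<bar> \<le> \<rho> * x" for x \<beta>
  proof -
    have L: "x / 2 \<le> x - 2 * \<beta> * k" if k: "k \<in> {a..b}" for k
    proof (cases "\<beta> \<ge> 0")
      case True
      then have "4 * \<beta> * k \<le> 4 * \<beta> * b" using k by (intro mult_left_mono) auto
      then show ?thesis using \<beta> by linarith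
    next
      case False
      then have "\<beta> * k \<le> 0" using k assms(1) by (simp add: mult_nonpos_nonneg)
      then show ?thesis using x by linarith
    qed
    have "norm (phase_integral a b x \<beta> g) \<le> (b - a) * (G1 / (x / 2) + 2 * \<bar>\<beta>\<bar> * G0 / (x / 2)\<^sup>2)"
      using assms(2,4,5) x L G0 G1 g g'
      by (intro norm_phase_integral_le) (auto intro: has_vector_derivative_at_within)
    also have "\<dots> = (b - a) * (2 * G1 / x + 8 * (\<bar>\<beta>\<bar> * G0) / x\<^sup>2)"
      by (simp add: power2_eq_square field_simps)
    also have "\<dots> \<le> (b - a) * (2 * G1 / x + 8 * (\<rho> * x * G0) / x\<^sup>2)"
      using \<beta>(2) order_trans[OF norm_ge_zero G0[of a]] assms(2)
      by (intro mult_left_mono add_left_mono divide_right_mono mult_right_mono) auto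
    also have "\<dots> = (b - a) * (2 * G1 + 8 * \<rho> * G0) / x"
      using x by (simp add: power2_eq_square field_simps)
    finally show ?thesis .
  qed
  then show ?thesis by (rule that)
qed

lemma free_packet_eq_phase_integral:
  assumes "\<And>k. k \<notin> {a..b} \<Longrightarrow> vphi k = 0"
  shows "free_packet hbar m vphi t x =
           of_real (1 / sqrt (2 * pi)) * phase_integral a b x (hbar * t / (2 * m)) vphi"
proof -
  have "(\<lambda>k. exp (\<i> * of_real (k * x - hbar * k\<^sup>2 * t / (2 * m))) * vphi k) =
        (\<lambda>k. if k \<in> {a..b} then exp (\<i> * of_real (k * x - hbar * t / (2 * m) * k\<^sup>2)) * vphi k else 0)"
    using assms by (auto simp: algebra_simps)
  then show ?thesis
    unfolding free_packet_def phase_integral_def by (simp only: integral_restrict_UNIV)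
qed

lemma free_packet_has_vector_derivative:
  assumes vphi: "continuous_on UNIV vphi" and supp: "\<And>k. k \<notin> {a..b} \<Longrightarrow> vphi k = 0"
  shows "((\<lambda>y. free_packet hbar m vphi t y) has_vector_derivative
           of_real (1 / sqrt (2 * pi)) *
           phase_integral a b x (hbar * t / (2 * m)) (\<lambda>k. \<i> * of_real k * vphi k)) (at x)"
proof -
  define \<beta> where "\<beta> = hbar * t / (2 * m)"
  define c where "c = complex_of_real (1 / sqrt (2 * pi))"
  define e where "e y k = exp (\<i> * of_real (k * y - \<beta> * k\<^sup>2))" for y k
  have "((\<lambda>y. integral (cbox a b) (\<lambda>k. e y k * vphi k)) has_vector_derivative
          integral (cbox a b) (\<lambda>k. e x k * (\<i> * of_real k * vphi k))) (at x within UNIV)"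
  proof (rule leibniz_rule_vector_derivative)
    fix y k
    have "((\<lambda>y. e y k) has_vector_derivative \<i> * of_real k * e y k) (at y within UNIV)"
      unfolding e_def by (rule has_vector_derivative_exp_i_of_real) (auto intro!: derivative_eq_intros)
    then show "((\<lambda>y. e y k * vphi k) has_vector_derivative e y k * (\<i> * of_real k * vphi k))
                 (at y within UNIV)"
      by (rule has_vector_derivative_eq_rhs[OF has_vector_derivative_mult_left]) (simp add: ac_simps)
  next
    fix y
    show "(\<lambda>k. e y k * vphi k) integrable_on cbox a b"
      unfolding e_def
      by (intro integrable_continuous continuous_intros continuous_on_subset[OF vphi]) auto
  next
    have "continuous_on UNIV (\<lambda>(y, k). e y k * (\<i> * of_real k * vphi k))"
      unfolding e_def case_prod_beta
      by (intro continuous_intros continuous_on_compose2[OF vphi]) auto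
    then show "continuous_on (UNIV \<times> cbox a b) (\<lambda>(y, k). e y k * (\<i> * of_real k * vphi k))"
      by (rule continuous_on_subset) auto
  qed auto
  then have "((\<lambda>y. c * integral {a..b} (\<lambda>k. e y k * vphi k)) has_vector_derivative
               c * phase_integral a b x \<beta> (\<lambda>k. \<i> * of_real k * vphi k)) (at x)"
    unfolding cbox_interval phase_integral_def e_def by (rule has_vector_derivative_mult_right)
  moreover have "free_packet hbar m vphi t = (\<lambda>y. c * integral {a..b} (\<lambda>k. e y k * vphi k))"
    using free_packet_eq_phase_integral[OF supp]
    by (auto simp: phase_integral_def c_def e_def \<beta>_def)
  ultimately show ?thesis
    by (simp only: c_def \<beta>_def)
qed

lemma prob_current_eq_phase_integrals:
  assumes "continuous_on UNIV vphi" and "\<And>k. k \<notin> {a..b} \<Longrightarrow> vphi k = 0"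
  shows "prob_current hbar m vphi t x =
           hbar / (2 * pi * m) *
           Im (cnj (phase_integral a b x (hbar * t / (2 * m)) vphi) *
               phase_integral a b x (hbar * t / (2 * m)) (\<lambda>k. \<i> * of_real k * vphi k))"
proof -
  define c where "c = complex_of_real (1 / sqrt (2 * pi))"
  define I where "I = phase_integral a b x (hbar * t / (2 * m)) vphi"
  define J where "J = phase_integral a b x (hbar * t / (2 * m)) (\<lambda>k. \<i> * of_real k * vphi k)"
  have "cnj c * c = of_real (1 / (2 * pi))"
    unfolding c_def by (simp add: power_divide flip: of_real_mult)
  then have "cnj (c * I) * (c * J) = of_real (1 / (2 * pi)) * (cnj I * J)"
    by (simp add: mult_ac)
  moreover have "free_packet hbar m vphi t x = c * I"
    unfolding c_def I_def by (rule free_packet_eq_phase_integral[OF assms(2)])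
  moreover have "vector_derivative (\<lambda>y. free_packet hbar m vphi t y) (at x) = c * J"
    unfolding c_def J_def by (rule vector_derivative_at[OF free_packet_has_vector_derivative[OF assms]])
  ultimately show ?thesis
    unfolding prob_current_def I_def J_def by simp
qed

lemma abs_prob_current_le:
  assumes "hbar > 0" and "m > 0"
    and "continuous_on UNIV vphi" and "\<And>k. k \<notin> {a..b} \<Longrightarrow> vphi k = 0"
  shows "\<bar>prob_current hbar m vphi t x\<bar> \<le>
           hbar / (2 * pi * m) *
           (norm (phase_integral a b x (hbar * t / (2 * m)) vphi) *
            norm (phase_integral a b x (hbar * t / (2 * m)) (\<lambda>k. \<i> * of_real k * vphi k)))"
proof -
  define I J where "I = phase_integral a b x (hbar * t / (2 * m)) vphi"
    and "J = phase_integral a b x (hbar * t / (2 * m)) (\<lambda>k. \<i> * of_real k * vphi k)"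
  have "prob_current hbar m vphi t x = hbar / (2 * pi * m) * Im (cnj I * J)"
    unfolding I_def J_def by (rule prob_current_eq_phase_integrals[OF assms(3,4)])
  then have "\<bar>prob_current hbar m vphi t x\<bar> = hbar / (2 * pi * m) * \<bar>Im (cnj I * J)\<bar>"
    using assms(1,2) by (simp only: abs_mult) simp
  also have "\<dots> \<le> hbar / (2 * pi * m) * norm (cnj I * J)"
    using assms(1,2) by (intro mult_left_mono abs_Im_le_cmod) auto
  finally show ?thesis
    unfolding I_def J_def by (simp add: norm_mult)
qed

lemma free_phase_nonstationary:
  fixes hbar m b \<tau> M s :: real
  assumes hbar: "hbar > 0" and m: "m > 0" and b: "0 \<le> b"
    and M: "max 1 (max \<bar>\<tau>\<bar> (2 * hbar * \<bar>\<tau>\<bar> * b / m)) \<le> M" and s: "s \<in> {-M..\<tau>}"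
  shows "0 < M" and "4 * (hbar * s / (2 * m)) * b \<le> M" and "\<bar>hbar * s / (2 * m)\<bar> \<le> hbar / (2 * m) * M"
proof -
  show "0 < M" using M by auto
  have "4 * (hbar * s / (2 * m)) * b = 2 * hbar * s * b / m"
    by simp
  also have "\<dots> \<le> 2 * hbar * \<bar>\<tau>\<bar> * b / m"
    using s hbar m b by (intro divide_right_mono mult_right_mono mult_left_mono) auto
  also have "\<dots> \<le> M"
    using M by simp
  finally show "4 * (hbar * s / (2 * m)) * b \<le> M" .
  have "\<bar>s\<bar> \<le> M"
    using M s by auto
  then show "\<bar>hbar * s / (2 * m)\<bar> \<le> hbar / (2 * m) * M"
    using hbar m by (auto simp: abs_mult intro!: divide_right_mono mult_left_mono)
qed

lemma prob_current_decay:
  fixes hbar m a b \<tau> :: real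
  assumes hbar: "hbar > 0" and m: "m > 0" and vphi: "vphi C1_differentiable_on UNIV"
    and ab: "0 \<le> a" "a \<le> b" and supp: "\<And>k. k \<notin> {a..b} \<Longrightarrow> vphi k = 0"
  obtains C where "\<forall>\<^sub>F M in at_top. \<forall>s\<in>{-M..\<tau>}. \<bar>prob_current hbar m vphi s M\<bar> \<le> C / M\<^sup>2"
proof -
  define \<psi> where "\<psi> k = \<i> * of_real k * vphi k" for k
  have cont: "continuous_on UNIV vphi"
    using vphi by (rule C1_differentiable_imp_continuous_on)
  note ends = continuous_vanishing_outside_Icc_endpoints[OF cont supp]
  have "vphi C1_differentiable_on {a..b}" "\<psi> C1_differentiable_on {a..b}"
    using C1_differentiable_on_subset[OF vphi] unfolding \<psi>_def
    by (auto intro!: derivative_intros)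
  then obtain C0 C1 where
    C0: "\<And>x \<beta>. 0 < x \<Longrightarrow> 4 * \<beta> * b \<le> x \<Longrightarrow> \<bar>\<beta>\<bar> \<le> hbar / (2 * m) * x \<Longrightarrow>
           norm (phase_integral a b x \<beta> vphi) \<le> C0 / x" and
    C1: "\<And>x \<beta>. 0 < x \<Longrightarrow> 4 * \<beta> * b \<le> x \<Longrightarrow> \<bar>\<beta>\<bar> \<le> hbar / (2 * m) * x \<Longrightarrow>
           norm (phase_integral a b x \<beta> \<psi>) \<le> C1 / x"
    using phase_integral_decay[OF ab] ends by (metis \<psi>_def mult_zero_right)
  define M0 where "M0 = max 1 (max \<bar>\<tau>\<bar> (2 * hbar * \<bar>\<tau>\<bar> * b / m))"
  have "\<bar>prob_current hbar m vphi s M\<bar> \<le> hbar / (2 * pi * m) * C0 * C1 / M\<^sup>2"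
    if M: "M0 \<le> M" and s: "s \<in> {-M..\<tau>}" for M s
  proof -
    note phase = free_phase_nonstationary[OF hbar m order_trans[OF ab] M[unfolded M0_def] s]
    have "\<bar>prob_current hbar m vphi s M\<bar> \<le>
            hbar / (2 * pi * m) * (norm (phase_integral a b M (hbar * s / (2 * m)) vphi) *
                                   norm (phase_integral a b M (hbar * s / (2 * m)) \<psi>))"
      unfolding \<psi>_def using hbar m cont supp by (rule abs_prob_current_le)
    also have "\<dots> \<le> hbar / (2 * pi * m) * (C0 / M * (C1 / M))"
      using hbar m C0[OF phase] C1[OF phase]
      by (intro mult_left_mono mult_mono) (auto intro: order_trans[OF norm_ge_zero])
    finally show ?thesis by (simp add: power2_eq_square)
  qed
  then have "\<forall>\<^sub>F M in at_top. \<forall>s\<in>{-M..\<tau>}.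
               \<bar>prob_current hbar m vphi s M\<bar> \<le> hbar / (2 * pi * m) * C0 * C1 / M\<^sup>2"
    by (intro eventually_mono[OF eventually_ge_at_top[of M0]] ballI)
  then show ?thesis
    by (rule that)
qed

lemma tendsto_integral_zero_of_inverse_square_bound:
  fixes f :: "real \<Rightarrow> real \<Rightarrow> real"
  assumes "\<forall>\<^sub>F M in at_top. \<forall>s\<in>{-M..\<tau>}. \<bar>f s M\<bar> \<le> C / M\<^sup>2"
  shows "((\<lambda>M. integral {-M..\<tau>} (\<lambda>s. f s M)) \<longlongrightarrow> 0) at_top"
proof (rule Lim_null_comparison)
  show "\<forall>\<^sub>F M in at_top. norm (integral {-M..\<tau>} (\<lambda>s. f s M)) \<le> 2 * \<bar>C\<bar> / M"
    using assms eventually_ge_at_top[of "max 1 \<bar>\<tau>\<bar>"]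
  proof eventually_elim
    case (elim M)
    then have M: "0 < M" "\<bar>\<tau>\<bar> \<le> M" by auto
    show ?case
    proof (cases "(\<lambda>s. f s M) integrable_on {-M..\<tau>}")
      case True
      have "norm (integral {-M..\<tau>} (\<lambda>s. f s M)) \<le> \<bar>C\<bar> / M\<^sup>2 * measure lborel {-M..\<tau>}"
        using elim(1)
        by (intro has_integral_bound_real[where S="{}", OF _ _ integrable_integral[OF True]])
          (auto intro!: order_trans[OF _ divide_right_mono[OF abs_ge_self]])
      also have "\<dots> \<le> \<bar>C\<bar> / M\<^sup>2 * (2 * M)"
        using M by (intro mult_left_mono) auto
      also have "\<dots> = 2 * \<bar>C\<bar> / M"
        using M by (simp add: power2_eq_square)
      finally show ?thesis .
    qed (use M in \<open>simp add: not_integrable_integral\<close>)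
  qed
  show "((\<lambda>M. 2 * \<bar>C\<bar> / M) \<longlongrightarrow> 0) at_top"
    by real_asymp
qed

theorem mainTheorem3:
  fixes hbar m a1 a2 tau :: real and vphi :: "real \<Rightarrow> complex"
  assumes "hbar > 0" and "m > 0"
    and "vphi C1_differentiable_on UNIV"
    and "0 < a1" and "a1 < a2"
    and "\<forall>k. k \<notin> {a1..a2} \<longrightarrow> vphi k = 0"
  shows "((\<lambda>M. integral {-M..tau} (\<lambda>s. prob_current hbar m vphi s M)) \<longlongrightarrow> 0) at_top"
proof -
  obtain C where "\<forall>\<^sub>F M in at_top. \<forall>s\<in>{-M..tau}. \<bar>prob_current hbar m vphi s M\<bar> \<le> C / M\<^sup>2"
    using prob_current_decay[of hbar m vphi a1 a2] assms by auto
  then show ?thesis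
    by (rule tendsto_integral_zero_of_inverse_square_bound)
qed

end
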